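(* Let $R=\mathbb C[x,y,z,w]$ and $I=\langle x,z,w\rangle\cap\langle x,y\rangle$. There is no collection $\Lambda=(\ell_1,\ldots,\ell_n)$ of linear forms in $R$ together with an integer $a\in\{1,\ldots,n\}$ satisfying $n-a+1=3$ and $\sqrt{I_a(\Lambda)}=I$.
   Context: For a collection $\Lambda=(\ell_1,\ldots,\ell_n)$ of linear forms (possibly some proportional) and $1\le a\le n$, $I_a(\Lambda)$ is the ideal generated by all products $\ell_{i_1}\cdots\ell_{i_a}$ with $1\le i_1<\cdots<i_a\le n$. *)

theory Defs
  imports Complex_Main "HOL-Computational_Algebra.Polynomial"
begin

text \<open>The ring R = C[x,y,z,w], realised as iterated univariate polynomials
  C[x][y][z][w]; x is the innermost variable, w the outermost.\<close>
type_synonym R = "complex poly poly poly poly"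

definition cst :: "complex \<Rightarrow> R" where
  "cst c = [:[:[:[:c:]:]:]:]"

definition var_x :: R where "var_x = [:[:[:[:0, 1:]:]:]:]"
definition var_y :: R where "var_y = [:[:[:0, 1:]:]:]"
definition var_z :: R where "var_z = [:[:0, 1:]:]"
definition var_w :: R where "var_w = [:0, 1:]"

definition is_linear_form :: "R \<Rightarrow> bool" where
  "is_linear_form l \<longleftrightarrow> (\<exists>a b c d. l = cst a * var_x + cst b * var_y + cst c * var_z + cst d * var_w)"

definition gen_ideal :: "'a::comm_ring_1 set \<Rightarrow> 'a set" where
  "gen_ideal S = {(\<Sum>s\<in>F. c s * s) | F c. finite F \<and> F \<subseteq> S}"

definition radical :: "'a::comm_ring_1 set \<Rightarrow> 'a set" where
  "radical J = {f. \<exists>k. f ^ k \<in> J}"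

definition I_a :: "nat \<Rightarrow> 'a::comm_ring_1 list \<Rightarrow> 'a set" where
  "I_a a L = gen_ideal {(\<Prod>i\<in>S. L ! i) | S. S \<subseteq> {..<length L} \<and> card S = a}"

end

theory Submission
  imports Defs
begin

text \<open>Passing to zero loci: at a point p, every element of the radical of I_a(\<Lambda>) vanishes iff
  every a-element product of the forms does, i.e. iff at least n - a + 1 = 3 of the forms vanish
  at p. So the zero locus of I, the plane x = y = 0 together with the line x = z = w = 0, would be
  exactly the set of points where at least three forms vanish. A generic point of the plane shows
  that three forms lie in the span of x and y, and one of them involves y, since otherwise the point
  (0,1,1,0) would be in the locus. At least three forms vanish at (0,1,0,0), i.e. involve only
  x, z, w. If two of these have independent z,w-parts, then together with that form they
  have a common zero with x \<noteq> 0; otherwise all of them vanish at a point (0,1,c,d) with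
  (c,d) \<noteq> 0. Either point lies outside the locus.\<close>

type_synonym point = "complex \<times> complex \<times> complex \<times> complex"

definition ev :: "R \<Rightarrow> point \<Rightarrow> complex" where
  "ev f p = (case p of (a, b, c, d) \<Rightarrow> poly (poly (poly (poly f [:[:[:d:]:]:]) [:[:c:]:]) [:b:]) a)"

lemma ev_add [simp]: "ev (f + g) p = ev f p + ev g p"
  by (cases p) (simp add: ev_def)

lemma ev_mult [simp]: "ev (f * g) p = ev f p * ev g p"
  by (cases p) (simp add: ev_def)

lemma ev_power [simp]: "ev (f ^ k) p = ev f p ^ k"
  by (cases p) (simp add: ev_def)

lemma ev_sum: "ev (\<Sum>s\<in>F. f s) p = (\<Sum>s\<in>F. ev (f s) p)"
  by (cases p) (simp add: ev_def poly_sum)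

lemma ev_prod: "ev (\<Prod>s\<in>F. f s) p = (\<Prod>s\<in>F. ev (f s) p)"
  by (cases p) (simp add: ev_def poly_prod)

lemma ev_cst [simp]: "ev (cst e) (a, b, c, d) = e"
  by (simp add: ev_def cst_def)

lemma ev_var_x [simp]: "ev var_x (a, b, c, d) = a"
  by (simp add: ev_def var_x_def)

lemma ev_var_y [simp]: "ev var_y (a, b, c, d) = b"
  by (simp add: ev_def var_y_def)

lemma ev_var_z [simp]: "ev var_z (a, b, c, d) = c"
  by (simp add: ev_def var_z_def)

lemma ev_var_w [simp]: "ev var_w (a, b, c, d) = d"
  by (simp add: ev_def var_w_def)

lemma ev_linear_form:
  assumes "is_linear_form l"
  shows "ev l (a, b, c, d) =
    ev l (1, 0, 0, 0) * a + ev l (0, 1, 0, 0) * b + ev l (0, 0, 1, 0) * c + ev l (0, 0, 0, 1) * d"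
  using assms by (auto simp: is_linear_form_def)

definition vanishes_at :: "R set \<Rightarrow> point \<Rightarrow> bool" where
  "vanishes_at J p \<longleftrightarrow> (\<forall>f\<in>J. ev f p = 0)"

lemma gen_ideal_mult_mem: "s \<in> S \<Longrightarrow> g * s \<in> gen_ideal S"
  unfolding gen_ideal_def by (rule CollectI, rule exI[of _ "{s}"], rule exI[of _ "\<lambda>_. g"]) auto

lemma gen_ideal_generator: "s \<in> S \<Longrightarrow> s \<in> gen_ideal (S :: 'a :: comm_ring_1 set)"
  using gen_ideal_mult_mem[of s S 1] by simp

lemma vanishes_at_gen_ideal_iff: "vanishes_at (gen_ideal S) p \<longleftrightarrow> vanishes_at S p"
proof
  assume "vanishes_at S p"
  then show "vanishes_at (gen_ideal S) p"
    by (fastforce simp: vanishes_at_def gen_ideal_def ev_sum intro!: sum.neutral)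
qed (auto simp: vanishes_at_def intro: gen_ideal_generator)

lemma vanishes_at_radical_iff: "vanishes_at (radical J) p \<longleftrightarrow> vanishes_at J p"
proof
  assume "vanishes_at (radical J) p"
  moreover have "J \<subseteq> radical J"
    by (auto simp: radical_def intro: exI[of _ 1])
  ultimately show "vanishes_at J p"
    by (auto simp: vanishes_at_def)
next
  assume "vanishes_at J p"
  then show "vanishes_at (radical J) p"
    by (auto simp: vanishes_at_def radical_def)
qed

lemma all_card_subsets_meet_iff:
  assumes "finite A" "Z \<subseteq> A" "a \<le> card A"
  shows "(\<forall>S\<subseteq>A. card S = a \<longrightarrow> S \<inter> Z \<noteq> {}) \<longleftrightarrow> card A - a < card Z"
proof
  assume meet: "\<forall>S\<subseteq>A. card S = a \<longrightarrow> S \<inter> Z \<noteq> {}"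
  show "card A - a < card Z"
  proof (rule ccontr)
    assume "\<not> card A - a < card Z"
    then have "a \<le> card (A - Z)"
      using assms by (simp add: card_Diff_subset finite_subset)
    then obtain S where "S \<subseteq> A - Z" "card S = a"
      by (meson obtain_subset_with_card_n)
    then show False
      using meet by blast
  qed
next
  assume small: "card A - a < card Z"
  show "\<forall>S\<subseteq>A. card S = a \<longrightarrow> S \<inter> Z \<noteq> {}"
  proof (intro allI impI)
    fix S assume "S \<subseteq> A" "card S = a"
    show "S \<inter> Z \<noteq> {}"
    proof
      assume "S \<inter> Z = {}"
      then have "card S \<le> card (A - Z)"
        using \<open>S \<subseteq> A\<close> assms(1) by (intro card_mono) auto
      then show False
        using small assms \<open>card S = a\<close> card_mono[OF assms(1,2)]
        by (simp add: card_Diff_subset finite_subset)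
    qed
  qed
qed

definition zeros :: "R list \<Rightarrow> point \<Rightarrow> nat set" where
  "zeros L p = {i. i < length L \<and> ev (L ! i) p = 0}"

lemma zeros_subset: "zeros L p \<subseteq> {..<length L}"
  by (auto simp: zeros_def)

lemma finite_zeros: "finite (zeros L p)"
  using finite_subset[OF zeros_subset] by blast

lemma vanishes_at_I_a_iff:
  assumes "a \<le> length L"
  shows "vanishes_at (I_a a L) p \<longleftrightarrow> length L - a < card (zeros L p)"
proof -
  have "vanishes_at (I_a a L) p \<longleftrightarrow>
      (\<forall>S\<subseteq>{..<length L}. card S = a \<longrightarrow> ev (\<Prod>i\<in>S. L ! i) p = 0)"
    unfolding I_a_def vanishes_at_gen_ideal_iff unfolding vanishes_at_def by auto
  also have "\<dots> \<longleftrightarrow> (\<forall>S\<subseteq>{..<length L}. card S = a \<longrightarrow> S \<inter> zeros L p \<noteq> {})"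
    by (intro all_cong imp_cong refl)
      (auto simp: ev_prod zeros_def finite_subset[of _ "{..<length L}"])
  also have "\<dots> \<longleftrightarrow> length L - a < card (zeros L p)"
    using all_card_subsets_meet_iff[OF finite_lessThan zeros_subset] assms by simp
  finally show ?thesis .
qed

lemma ex_avoiding_affine_roots:
  fixes c d :: "nat \<Rightarrow> 'a :: field_char_0"
  shows "\<exists>t. \<forall>i<n. c i + d i * t = 0 \<longrightarrow> c i = 0 \<and> d i = 0"
proof -
  have "finite ((\<lambda>i. - c i / d i) ` {..<n})"
    by simp
  then obtain t where t: "t \<notin> (\<lambda>i. - c i / d i) ` {..<n}"
    using ex_new_if_finite[OF infinite_UNIV_char_0] by blast
  have "c i = 0 \<and> d i = 0" if "i < n" "c i + d i * t = 0" for i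
  proof (cases "d i = 0")
    case False
    then have "t = - c i / d i"
      using that(2) by (simp add: field_simps add_eq_0_iff2)
    then show ?thesis
      using t that(1) by blast
  qed (use that in simp)
  then show ?thesis
    by blast
qed

lemma ex_common_kernel_vector:
  fixes c d :: "nat \<Rightarrow> 'a :: field"
  assumes "\<forall>i\<in>B. \<forall>j\<in>B. c i * d j - d i * c j = 0"
  shows "\<exists>u v. (u \<noteq> 0 \<or> v \<noteq> 0) \<and> (\<forall>i\<in>B. c i * u + d i * v = 0)"
proof (cases "\<exists>i\<in>B. c i \<noteq> 0 \<or> d i \<noteq> 0")
  case True
  then obtain i where "i \<in> B" "c i \<noteq> 0 \<or> d i \<noteq> 0"
    by blast
  then show ?thesis
    using assms by (intro exI[of _ "d i"] exI[of _ "- c i"]) (auto simp: algebra_simps)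
qed (auto intro!: exI[of _ 1])

definition locus_I :: "point set" where
  "locus_I = {(a, b, c, d). a = 0 \<and> (b = 0 \<or> c = 0 \<and> d = 0)}"

lemma vanishes_at_I_iff:
  "vanishes_at (gen_ideal {var_x, var_z, var_w} \<inter> gen_ideal {var_x, var_y}) p \<longleftrightarrow> p \<in> locus_I"
proof (cases p)
  case (fields a b c d)
  let ?I = "gen_ideal {var_x, var_z, var_w} \<inter> gen_ideal {var_x, var_y}"
  have "var_x \<in> ?I" "var_y * var_z \<in> ?I" "var_y * var_w \<in> ?I"
    using gen_ideal_mult_mem[of var_z "{var_x, var_z, var_w}" var_y]
      gen_ideal_mult_mem[of var_w "{var_x, var_z, var_w}" var_y]
      gen_ideal_mult_mem[of var_y "{var_x, var_y}"]
    by (auto intro: gen_ideal_generator simp: mult.commute[of _ var_y])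
  then have "vanishes_at ?I p \<Longrightarrow> a = 0 \<and> b * c = 0 \<and> b * d = 0"
    unfolding vanishes_at_def fields by (metis ev_mult ev_var_x ev_var_y ev_var_z ev_var_w)
  then have "vanishes_at ?I p \<Longrightarrow> p \<in> locus_I"
    by (auto simp: locus_I_def fields)
  moreover have "vanishes_at ?I p" if "p \<in> locus_I"
  proof -
    have "vanishes_at (gen_ideal {var_x, var_y}) p \<or> vanishes_at (gen_ideal {var_x, var_z, var_w}) p"
      unfolding vanishes_at_gen_ideal_iff using that by (auto simp: vanishes_at_def locus_I_def fields)
    then show ?thesis
      unfolding vanishes_at_def by blast
  qed
  ultimately show ?thesis
    by blast
qed

lemma ex_form_in_span_xy_involving_y:
  assumes lin: "\<forall>l\<in>set L. is_linear_form l"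
    and plane: "\<And>t. 3 \<le> card (zeros L (0, 0, 1, t))"
    and "card (zeros L (0, 1, 1, 0)) < 3"
  shows "\<exists>s<length L. ev (L ! s) (0, 1, 0, 0) \<noteq> 0 \<and> ev (L ! s) (0, 0, 1, 0) = 0 \<and>
    ev (L ! s) (0, 0, 0, 1) = 0"
proof (rule ccontr)
  assume none: "\<not> ?thesis"
  define \<beta> \<gamma> \<delta> where "\<beta> i = ev (L ! i) (0, 1, 0, 0)" and "\<gamma> i = ev (L ! i) (0, 0, 1, 0)"
    and "\<delta> i = ev (L ! i) (0, 0, 0, 1)" for i
  have ev_L: "ev (L ! i) (0, b, c, d) = \<beta> i * b + \<gamma> i * c + \<delta> i * d"
    if "i < length L" for i b c d
    using ev_linear_form[of "L ! i" 0 b c d] lin that by (simp add: \<beta>_def \<gamma>_def \<delta>_def)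
  define A where "A = {i. i < length L \<and> \<gamma> i = 0 \<and> \<delta> i = 0}"
  have \<beta>_A: "\<beta> i = 0" if "i \<in> A" for i
    using none that by (auto simp: A_def \<beta>_def \<gamma>_def \<delta>_def)
  obtain t where "\<forall>i<length L. \<gamma> i + \<delta> i * t = 0 \<longrightarrow> \<gamma> i = 0 \<and> \<delta> i = 0"
    using ex_avoiding_affine_roots by blast
  then have "zeros L (0, 0, 1, t) \<subseteq> A"
    by (auto simp: zeros_def A_def ev_L)
  moreover have "A \<subseteq> zeros L (0, 1, 1, 0)"
    using \<beta>_A by (auto simp: zeros_def A_def ev_L)
  ultimately have "card (zeros L (0, 0, 1, t)) \<le> card (zeros L (0, 1, 1, 0))"
    by (intro card_mono finite_zeros) blast
  then show False
    using plane[of t] assms(3) by linarith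
qed

lemma ex_threefold_zero_outside_locus_I:
  assumes lin: "\<forall>l\<in>set L. is_linear_form l"
    and "3 \<le> card (zeros L (0, 1, 0, 0))"
    and s: "s < length L" "ev (L ! s) (0, 1, 0, 0) \<noteq> 0" "ev (L ! s) (0, 0, 1, 0) = 0"
      "ev (L ! s) (0, 0, 0, 1) = 0"
  shows "\<exists>q. 3 \<le> card (zeros L q) \<and> q \<notin> locus_I"
proof -
  define \<alpha> \<beta> \<gamma> \<delta> where "\<alpha> i = ev (L ! i) (1, 0, 0, 0)" and "\<beta> i = ev (L ! i) (0, 1, 0, 0)"
    and "\<gamma> i = ev (L ! i) (0, 0, 1, 0)" and "\<delta> i = ev (L ! i) (0, 0, 0, 1)" for i
  have ev_L: "ev (L ! i) (a, b, c, d) = \<alpha> i * a + \<beta> i * b + \<gamma> i * c + \<delta> i * d"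
    if "i < length L" for i a b c d
    using ev_linear_form[of "L ! i" a b c d] lin that by (simp add: \<alpha>_def \<beta>_def \<gamma>_def \<delta>_def)
  have s': "\<beta> s \<noteq> 0" "\<gamma> s = 0" "\<delta> s = 0"
    using s by (simp_all add: \<beta>_def \<gamma>_def \<delta>_def)
  define B where "B = zeros L (0, 1, 0, 0)"
  have B: "i < length L \<and> \<beta> i = 0" if "i \<in> B" for i
    using that by (auto simp: B_def zeros_def ev_L)
  have threefold: "3 \<le> card (zeros L q)" if "3 \<le> card Z" "Z \<subseteq> zeros L q" for Z q
    using that card_mono[OF finite_zeros, of Z L q] by linarith
  show ?thesis
  proof (cases "\<forall>i\<in>B. \<forall>j\<in>B. \<gamma> i * \<delta> j - \<delta> i * \<gamma> j = 0")
    case True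
    then obtain u v where uv: "u \<noteq> 0 \<or> v \<noteq> 0" "\<forall>i\<in>B. \<gamma> i * u + \<delta> i * v = 0"
      using ex_common_kernel_vector by blast
    then have "B \<subseteq> zeros L (0, 1, u, v)"
      using B by (auto simp: zeros_def ev_L)
    then have "3 \<le> card (zeros L (0, 1, u, v))"
      using threefold assms(2) B_def by blast
    moreover have "(0, 1, u, v) \<notin> locus_I"
      using uv(1) by (simp add: locus_I_def)
    ultimately show ?thesis
      by blast
  next
    case False
    then obtain i j where ij: "i \<in> B" "j \<in> B" and D: "\<gamma> i * \<delta> j - \<delta> i * \<gamma> j \<noteq> 0"
      by blast
    define D where "D = \<gamma> i * \<delta> j - \<delta> i * \<gamma> j"
    text \<open>A common zero of the forms s, i, j with nonzero x-coordinate, by Cramer's rule.\<close>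
    define q where "q = (D, - \<alpha> s * D / \<beta> s, \<delta> i * \<alpha> j - \<alpha> i * \<delta> j, \<alpha> i * \<gamma> j - \<gamma> i * \<alpha> j)"
    have "{s, i, j} \<subseteq> zeros L q"
      using ij B[of i] B[of j] s(1) s' by (auto simp: zeros_def ev_L q_def D_def field_simps)
    moreover have "card {s, i, j} = 3"
    proof -
      have "i \<noteq> j"
        using D by auto
      moreover have "s \<noteq> i" "s \<noteq> j"
        using ij B[of i] B[of j] s' by auto
      ultimately show ?thesis
        by simp
    qed
    ultimately have "3 \<le> card (zeros L q)"
      using threefold by (metis order_refl)
    moreover have "q \<notin> locus_I"
      using D by (simp add: locus_I_def q_def D_def)
    ultimately show ?thesis
      by blast
  qed
qed

lemma linear_forms_threefold_zeros_not_locus_I: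
  assumes lin: "\<forall>l\<in>set L. is_linear_form l"
  shows "\<exists>p. 3 \<le> card (zeros L p) \<longleftrightarrow> p \<notin> locus_I"
proof (rule ccontr)
  assume "\<nexists>p. 3 \<le> card (zeros L p) \<longleftrightarrow> p \<notin> locus_I"
  then have locus: "3 \<le> card (zeros L p) \<longleftrightarrow> p \<in> locus_I" for p
    by blast
  have "3 \<le> card (zeros L (0, 0, 1, t))" for t
    using locus[of "(0, 0, 1, t)"] by (simp add: locus_I_def)
  moreover have "card (zeros L (0, 1, 1, 0)) < 3"
    using locus[of "(0, 1, 1, 0)"] by (simp add: locus_I_def)
  ultimately obtain s where "s < length L" "ev (L ! s) (0, 1, 0, 0) \<noteq> 0"
    "ev (L ! s) (0, 0, 1, 0) = 0" "ev (L ! s) (0, 0, 0, 1) = 0"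
    using ex_form_in_span_xy_involving_y[OF lin] by blast
  moreover have "3 \<le> card (zeros L (0, 1, 0, 0))"
    using locus[of "(0, 1, 0, 0)"] by (simp add: locus_I_def)
  ultimately obtain q where "3 \<le> card (zeros L q)" "q \<notin> locus_I"
    using ex_threefold_zero_outside_locus_I[OF lin] by blast
  then show False
    using locus by blast
qed

theorem mainTheorem6:
  shows "\<not> (\<exists>(L :: R list) (a :: nat).
            (\<forall>l\<in>set L. is_linear_form l) \<and> 1 \<le> a \<and> a \<le> length L \<and>
            length L - a + 1 = 3 \<and>
            radical (I_a a L) = gen_ideal {var_x, var_z, var_w} \<inter> gen_ideal {var_x, var_y})"
proof
  assume "\<exists>(L :: R list) (a :: nat).
            (\<forall>l\<in>set L. is_linear_form l) \<and> 1 \<le> a \<and> a \<le> length L \<and>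
            length L - a + 1 = 3 \<and>
            radical (I_a a L) = gen_ideal {var_x, var_z, var_w} \<inter> gen_ideal {var_x, var_y}"
  then obtain L :: "R list" and a where lin: "\<forall>l\<in>set L. is_linear_form l"
    and "a \<le> length L" "length L - a + 1 = 3"
    and rad: "radical (I_a a L) = gen_ideal {var_x, var_z, var_w} \<inter> gen_ideal {var_x, var_y}"
    by blast
  have "3 \<le> card (zeros L p) \<longleftrightarrow> p \<in> locus_I" for p
  proof -
    have "3 \<le> card (zeros L p) \<longleftrightarrow> vanishes_at (radical (I_a a L)) p"
      using vanishes_at_I_a_iff[OF \<open>a \<le> length L\<close>] \<open>length L - a + 1 = 3\<close>
      by (auto simp: vanishes_at_radical_iff)
    then show ?thesis
      unfolding rad vanishes_at_I_iff .
  qed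
  then show False
    using linear_forms_threefold_zeros_not_locus_I[OF lin] by blast
qed

end
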